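(* Let $w \in \mathfrak{S}_n$ and let $i \in \textsf{supp}(w)$ be unconfined in the reduced words of $w$. Then for every $u \preceq w$ in the Bruhat order, either $i \notin \textsf{supp}(u)$, or $i$ is unconfined in the reduced words of $u$.
   Context: $\sigma_i$ ($1\le i\le n-1$) is the simple transposition swapping $i$ and $i+1$; products are compositions of maps. A reduced word of $w$ is a word $i_1\cdots i_\ell$ of minimal length with $w=\sigma_{i_1}\cdots\sigma_{i_\ell}$. $\textsf{supp}(w)$ is the set of letters appearing in (any) reduced word of $w$. Bruhat order: $u \preceq w$ iff some reduced word of $u$ is a subword of some reduced word of $w$. Given a reduced word $s$ in which the letter $i$ appears exactly once, $i$ is unconfined in $s$ if that occurrence is not between two occurrences of $i+1$ and not between two occurrences of $i-1$ in $s$. If $i$ is unconfined in one reduced word of $w$, it appears exactly once and is unconfined in every reduced word of $w$; this is what "unconfined in the reduced words of $w$" means. *)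

theory Defs
  imports "HOL-Combinatorics.Permutations" "HOL-Library.Sublist"
begin

text \<open>Permutations of the symmetric group S_n are functions on nat permuting {1..n}.\<close>

definition stransp :: "nat \<Rightarrow> nat \<Rightarrow> nat" where
  "stransp i = (\<lambda>x. if x = i then i + 1 else if x = i + 1 then i else x)"

definition word_perm :: "nat list \<Rightarrow> nat \<Rightarrow> nat" where
  "word_perm ws = foldr (\<lambda>i f. stransp i \<circ> f) ws id"

definition valid_word :: "nat \<Rightarrow> nat list \<Rightarrow> bool" where
  "valid_word n ws \<longleftrightarrow> (\<forall>i\<in>set ws. 1 \<le> i \<and> i \<le> n - 1)"

definition reduced_word :: "nat \<Rightarrow> (nat \<Rightarrow> nat) \<Rightarrow> nat list \<Rightarrow> bool" where
  "reduced_word n w ws \<longleftrightarrow> valid_word n ws \<and> word_perm ws = w \<and>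
     (\<forall>vs. valid_word n vs \<and> word_perm vs = w \<longrightarrow> length ws \<le> length vs)"

definition supp :: "nat \<Rightarrow> (nat \<Rightarrow> nat) \<Rightarrow> nat set" where
  "supp n w = {i. \<exists>ws. reduced_word n w ws \<and> i \<in> set ws}"

definition bruhat_le :: "nat \<Rightarrow> (nat \<Rightarrow> nat) \<Rightarrow> (nat \<Rightarrow> nat) \<Rightarrow> bool" where
  "bruhat_le n u w \<longleftrightarrow> (\<exists>us ws. reduced_word n u us \<and> reduced_word n w ws \<and> subseq us ws)"

definition between :: "nat list \<Rightarrow> nat \<Rightarrow> nat \<Rightarrow> bool" where
  "between ws i j \<longleftrightarrow> (\<exists>a p b. a < p \<and> p < b \<and> b < length ws \<and>
       ws ! a = j \<and> ws ! p = i \<and> ws ! b = j)"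

definition unconfined_word :: "nat list \<Rightarrow> nat \<Rightarrow> bool" where
  "unconfined_word ws i \<longleftrightarrow> count_list ws i = 1 \<and>
     \<not> between ws i (i + 1) \<and> \<not> (i \<ge> 1 \<and> between ws i (i - 1))"

definition unconfined :: "nat \<Rightarrow> (nat \<Rightarrow> nat) \<Rightarrow> nat \<Rightarrow> bool" where
  "unconfined n w i \<longleftrightarrow> (\<forall>ws. reduced_word n w ws \<longrightarrow> unconfined_word ws i)"

end

(* Let C @ i # D be a reduced word of w, so that i occurs in neither C nor D, and let a
   subword of it be a reduced word of u.  If the subword avoids i, then u preserves the cut
   {..i}, and no reduced word of u contains i.  Otherwise it has the form A @ i # B, with the
   letters of A among those of C and the letters of B among those of D.  As A and B avoid i,
   u moves exactly one value x <= i behind position i and one value y > i in front of it,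
   namely x = A i and y = A (i + 1), and i - 1 (resp. i + 1) occurs on both sides of the
   letter i iff x ~= i and u i ~= y (resp. y ~= i + 1 and u (i + 1) ~= x).  Unconfinedness
   thus becomes a property of u alone, inherited from w by u.
   Each letter of a reduced word of u creates an inversion of u.  If i occurred twice, the
   second i would create an inversion between a value <= i and a value > i that the two
   conditions on x and y exclude; so i occurs exactly once, and the equivalence above applies
   to every reduced word of u. *)

theory Submission
  imports Defs
begin

lemma word_perm_Nil [simp]: "word_perm [] = id"
  by (simp add: word_perm_def)

lemma word_perm_Cons [simp]: "word_perm (j # ws) = stransp j \<circ> word_perm ws"
  by (simp add: word_perm_def)

lemma word_perm_append: "word_perm (xs @ ys) = word_perm xs \<circ> word_perm ys"
  by (induction xs) (simp_all add: o_assoc)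

lemma stransp_stransp [simp]: "stransp j (stransp j x) = x"
  by (simp add: stransp_def)

lemma stransp_eq_iff [simp]: "stransp j a = stransp j b \<longleftrightarrow> a = b"
  by (metis stransp_stransp)

lemma word_perm_append_Cons_apply:
  "word_perm (A @ i # B) t = word_perm A (stransp i (word_perm B t))"
  by (simp add: word_perm_append)

lemma bij_word_perm: "bij (word_perm ws)"
proof (induction ws)
  case (Cons j ws)
  have "bij (stransp j)"
    by (rule o_bij[of "stransp j"]) (simp_all add: fun_eq_iff)
  with Cons show ?case
    unfolding word_perm_Cons by (rule bij_comp)
qed (simp add: id_def[symmetric])

lemma inj_word_perm: "inj (word_perm ws)"
  using bij_word_perm bij_is_inj by blast

lemma word_perm_append_Cons_eq_iff:
  "word_perm (A @ i # B) t = word_perm A (stransp i t) \<longleftrightarrow> word_perm B t = t"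
  by (simp add: word_perm_append_Cons_apply inj_eq[OF inj_word_perm])

lemma word_perm_fixpoint:
  assumes "\<forall>k\<in>set ws. k \<noteq> z \<and> Suc k \<noteq> z"
  shows "word_perm ws z = z"
  using assms by (induction ws) (auto simp: stransp_def)

lemma reduced_word_infix:
  assumes "reduced_word n u (xs @ ys @ zs)"
  shows "reduced_word n (word_perm ys) ys"
  unfolding reduced_word_def
proof (intro conjI allI impI)
  show "valid_word n ys"
    using assms by (simp add: reduced_word_def valid_word_def)
next
  fix vs assume vs: "valid_word n vs \<and> word_perm vs = word_perm ys"
  then have "valid_word n (xs @ vs @ zs)" "word_perm (xs @ vs @ zs) = u"
    using assms by (auto simp: reduced_word_def valid_word_def word_perm_append)
  then show "length ys \<le> length vs"
    using assms unfolding reduced_word_def by fastforce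
qed simp

section \<open>Inversions\<close>

definition inversion :: "(nat \<Rightarrow> nat) \<Rightarrow> nat \<Rightarrow> nat \<Rightarrow> bool" where
  "inversion \<pi> a b \<longleftrightarrow> a < b \<and> (\<exists>p q. p < q \<and> \<pi> p = b \<and> \<pi> q = a)"

lemma inversionI: "p < q \<Longrightarrow> \<pi> p = b \<Longrightarrow> \<pi> q = a \<Longrightarrow> a < b \<Longrightarrow> inversion \<pi> a b"
  unfolding inversion_def by blast

lemma inversion_comp_stransp_cases:
  assumes "inversion (\<pi> \<circ> stransp k) a b"
  shows "inversion \<pi> a b \<or> (a = \<pi> k \<and> b = \<pi> (Suc k))"
proof -
  obtain p q where pq: "a < b" "p < q" "\<pi> (stransp k p) = b" "\<pi> (stransp k q) = a"
    using assms by (auto simp: inversion_def)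
  show ?thesis
  proof (cases "p = k \<and> q = Suc k")
    case True
    then show ?thesis using pq by (auto simp: stransp_def)
  next
    case False
    then have "stransp k p < stransp k q"
      using pq(2) by (auto simp: stransp_def)
    then show ?thesis using pq inversionI by blast
  qed
qed

lemma inversion_comp_stransp_ascent:
  assumes "\<pi> k < \<pi> (Suc k)" and "inversion \<pi> a b"
  shows "inversion (\<pi> \<circ> stransp k) a b"
proof -
  obtain p q where pq: "a < b" "p < q" "\<pi> p = b" "\<pi> q = a"
    using assms(2) by (auto simp: inversion_def)
  then have "\<not> (p = k \<and> q = Suc k)"
    using assms(1) by auto
  then have "stransp k p < stransp k q"
    using pq(2) by (auto simp: stransp_def)
  then show ?thesis
    using pq by (intro inversionI[of "stransp k p" "stransp k q"]) auto
qed

lemma inversion_comp_stransp_new: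
  "\<pi> k < \<pi> (Suc k) \<Longrightarrow> inversion (\<pi> \<circ> stransp k) (\<pi> k) (\<pi> (Suc k))"
  by (rule inversionI[of k "Suc k"]) (auto simp: stransp_def)

lemma inversion_word_perm_origin:
  "inversion (word_perm P) a b \<Longrightarrow>
   \<exists>P1 k P2. P = P1 @ k # P2 \<and> a = word_perm P1 k \<and> b = word_perm P1 (Suc k)"
proof (induction P arbitrary: a b rule: rev_induct)
  case (snoc k xs)
  have "inversion (word_perm xs \<circ> stransp k) a b"
    using snoc.prems by (simp add: word_perm_append o_def)
  then consider "inversion (word_perm xs) a b" | "a = word_perm xs k" "b = word_perm xs (Suc k)"
    using inversion_comp_stransp_cases by blast
  then show ?case
  proof cases
    case 1
    then obtain P1 j P2 where "xs = P1 @ j # P2" "a = word_perm P1 j" "b = word_perm P1 (Suc j)"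
      using snoc.IH by blast
    then show ?thesis by (intro exI[of _ P1] exI[of _ j] exI[of _ "P2 @ [k]"]) simp
  next
    case 2
    then show ?thesis by (intro exI[of _ xs] exI[of _ k] exI[of _ "[]"]) simp
  qed
qed (auto simp: inversion_def)

lemma stransp_conjugate:
  "inj \<pi> \<Longrightarrow> \<pi> (stransp m z) = Transposition.transpose (\<pi> m) (\<pi> (Suc m)) (\<pi> z)"
  by (auto simp: transpose_def stransp_def dest: injD)

lemma word_perm_cancel_pair:
  assumes P: "P = P1 @ k # P2"
    and swap: "word_perm P1 k = word_perm P (Suc j)" "word_perm P1 (Suc k) = word_perm P j"
  shows "word_perm (P @ [j]) = word_perm (P1 @ P2)"
proof
  fix z
  have "word_perm (P @ [j]) z
      = Transposition.transpose (word_perm P j) (word_perm P (Suc j)) (word_perm P z)"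
    by (simp add: word_perm_append stransp_conjugate[OF inj_word_perm])
  also have "word_perm P z
      = Transposition.transpose (word_perm P1 k) (word_perm P1 (Suc k)) (word_perm (P1 @ P2) z)"
    by (simp add: P word_perm_append stransp_conjugate[OF inj_word_perm])
  finally show "word_perm (P @ [j]) z = word_perm (P1 @ P2) z"
    using swap by (simp add: transpose_commute)
qed

lemma reduced_word_ascent:
  assumes red: "reduced_word n u (P @ j # S)"
  shows "word_perm P j < word_perm P (Suc j)"
proof (rule ccontr)
  \<comment> \<open>otherwise the letter that inverted these two values and the letter j cancel\<close>
  assume "\<not> ?thesis"
  moreover have "word_perm P j \<noteq> word_perm P (Suc j)"
    using inj_word_perm[of P] by (simp add: inj_eq)
  ultimately have "inversion (word_perm P) (word_perm P (Suc j)) (word_perm P j)"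
    by (intro inversionI[of j "Suc j"]) simp_all
  then obtain P1 k P2 where P: "P = P1 @ k # P2"
    and "word_perm P (Suc j) = word_perm P1 k" "word_perm P j = word_perm P1 (Suc k)"
    using inversion_word_perm_origin by blast
  then have "word_perm (P @ [j]) = word_perm (P1 @ P2)"
    using word_perm_cancel_pair by simp
  then have "word_perm (P1 @ P2 @ S) = word_perm ((P @ [j]) @ S)"
    by (simp only: word_perm_append comp_assoc flip: append_assoc)
  then have "word_perm (P1 @ P2 @ S) = u"
    using red by (simp add: reduced_word_def)
  moreover have "valid_word n (P1 @ P2 @ S)"
    using red P unfolding reduced_word_def valid_word_def by auto
  ultimately have "length (P @ j # S) \<le> length (P1 @ P2 @ S)"
    using red unfolding reduced_word_def by blast
  then show False
    using P by simp
qed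

lemma reduced_word_prefix_inversion:
  "reduced_word n u (P @ S) \<Longrightarrow> inversion (word_perm P) a b \<Longrightarrow> inversion u a b"
proof (induction S arbitrary: P)
  case Nil
  then show ?case by (simp add: reduced_word_def)
next
  case (Cons j S)
  have "inversion (word_perm (P @ [j])) a b"
    using Cons.prems reduced_word_ascent inversion_comp_stransp_ascent
    by (simp add: word_perm_append)
  then show ?case
    using Cons.IH[of "P @ [j]"] Cons.prems(1) by simp
qed

section \<open>Cuts\<close>

definition preserves_cut :: "nat \<Rightarrow> (nat \<Rightarrow> nat) \<Rightarrow> bool" where
  "preserves_cut k \<pi> \<longleftrightarrow> (\<forall>r. \<pi> r \<le> k \<longleftrightarrow> r \<le> k)"

lemma stransp_le_iff: "j \<noteq> k \<Longrightarrow> stransp j r \<le> k \<longleftrightarrow> r \<le> k"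
  by (auto simp: stransp_def)

lemma preserves_cut_word_perm: "k \<notin> set ws \<Longrightarrow> preserves_cut k (word_perm ws)"
  by (induction ws) (simp_all add: preserves_cut_def stransp_le_iff)

lemma reduced_word_letter_breaks_cut:
  assumes red: "reduced_word n u ws" and k: "k \<in> set ws"
  shows "\<not> preserves_cut k u"
proof
  assume "preserves_cut k u"
  then have cut: "u r \<le> k \<longleftrightarrow> r \<le> k" for r
    by (simp add: preserves_cut_def)
  obtain A B where ws: "ws = A @ k # B" and "k \<notin> set A"
    using split_list_first k by metis
  then have "word_perm A r \<le> k \<longleftrightarrow> r \<le> k" for r
    using preserves_cut_word_perm by (simp add: preserves_cut_def)
  then have small: "word_perm A k \<le> k" and big: "\<not> word_perm A (Suc k) \<le> k"
    by simp_all
  have "word_perm A k < word_perm A (Suc k)"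
    using red ws reduced_word_ascent by blast
  then have "inversion u (word_perm A k) (word_perm A (Suc k))"
    using reduced_word_prefix_inversion[of n u "A @ [k]" B] red ws inversion_comp_stransp_new
    by (simp add: word_perm_append)
  then obtain p q where "p < q" "u p = word_perm A (Suc k)" "u q = word_perm A k"
    by (auto simp: inversion_def)
  then show False
    using cut[of p] cut[of q] small big by linarith
qed

lemma reduced_word_letter_iff:
  assumes "reduced_word n u ws"
  shows "k \<in> set ws \<longleftrightarrow> \<not> preserves_cut k u"
proof -
  have "u = word_perm ws"
    using assms by (simp add: reduced_word_def)
  then show ?thesis
    using assms reduced_word_letter_breaks_cut preserves_cut_word_perm by blast
qed

lemma preserves_cut_Suc_iff:
  assumes "inj \<pi>" and fixed: "\<pi> (Suc k) = Suc k"
  shows "preserves_cut (Suc k) \<pi> \<longleftrightarrow> preserves_cut k \<pi>"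
proof -
  have "(\<pi> r \<le> Suc k \<longleftrightarrow> r \<le> Suc k) \<longleftrightarrow> (\<pi> r \<le> k \<longleftrightarrow> r \<le> k)" for r
  proof (cases "r = Suc k")
    case False
    then have "\<pi> r \<noteq> Suc k"
      using fixed inj_eq[OF assms(1), of r "Suc k"] by simp
    with False show ?thesis
      by (simp add: le_Suc_eq)
  qed (simp add: fixed)
  then show ?thesis
    unfolding preserves_cut_def by (simp only: all_cong)
qed

lemma reduced_word_moves_Suc_iff:
  assumes red: "reduced_word n (word_perm ws) ws" and "k \<notin> set ws \<or> Suc k \<notin> set ws"
  shows "word_perm ws (Suc k) \<noteq> Suc k \<longleftrightarrow> k \<in> set ws \<or> Suc k \<in> set ws"
proof
  assume "word_perm ws (Suc k) \<noteq> Suc k"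
  then show "k \<in> set ws \<or> Suc k \<in> set ws"
    using word_perm_fixpoint[of ws "Suc k"] by auto
next
  assume "k \<in> set ws \<or> Suc k \<in> set ws"
  then have "preserves_cut k (word_perm ws) \<noteq> preserves_cut (Suc k) (word_perm ws)"
    using assms(2) reduced_word_letter_iff[OF red] by blast
  then show "word_perm ws (Suc k) \<noteq> Suc k"
    using preserves_cut_Suc_iff[OF inj_word_perm] by blast
qed

lemma preserves_cut_not_in_supp: "preserves_cut k u \<Longrightarrow> k \<notin> supp n u"
  unfolding supp_def using reduced_word_letter_iff by blast

section \<open>Permutations with a single crossing\<close>

text \<open>In one-line notation, the positions up to i carry y and all values up to i except x:
  x and y are the only values crossing the cut between positions i and i + 1.\<close>

definition single_crossing :: "nat \<Rightarrow> (nat \<Rightarrow> nat) \<Rightarrow> nat \<Rightarrow> nat \<Rightarrow> bool" where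
  "single_crossing i \<pi> x y \<longleftrightarrow> x \<le> i \<and> i < y \<and>
     (\<forall>r. r \<le> i \<longleftrightarrow> \<pi> r = y \<or> (\<pi> r \<le> i \<and> \<pi> r \<noteq> x))"

lemma single_crossing_bounds:
  "single_crossing i \<pi> x y \<Longrightarrow> x \<le> i"
  "single_crossing i \<pi> x y \<Longrightarrow> i < y"
  unfolding single_crossing_def by blast+

lemma single_crossing_position_iff:
  "single_crossing i \<pi> x y \<Longrightarrow> r \<le> i \<longleftrightarrow> \<pi> r = y \<or> (\<pi> r \<le> i \<and> \<pi> r \<noteq> x)"
  unfolding single_crossing_def by blast

lemma single_crossing_position_y: "single_crossing i \<pi> x y \<Longrightarrow> \<pi> r = y \<Longrightarrow> r \<le> i"
  using single_crossing_position_iff by blast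

lemma single_crossing_position_x: "single_crossing i \<pi> x y \<Longrightarrow> \<pi> r = x \<Longrightarrow> i < r"
  using single_crossing_position_iff single_crossing_bounds by (metis less_le_not_le not_le)

lemma single_crossing_position_low:
  "single_crossing i \<pi> x y \<Longrightarrow> \<pi> r \<le> i \<Longrightarrow> \<pi> r \<noteq> x \<Longrightarrow> r \<le> i"
  using single_crossing_position_iff by blast

lemma single_crossing_position_high:
  "single_crossing i \<pi> x y \<Longrightarrow> i < \<pi> r \<Longrightarrow> \<pi> r \<noteq> y \<Longrightarrow> i < r"
  using single_crossing_position_iff by (metis leD not_le)

lemma single_crossing_word_perm:
  assumes "i \<notin> set A" and "i \<notin> set B"
  shows "single_crossing i (word_perm (A @ i # B)) (word_perm A i) (word_perm A (Suc i))"
  unfolding single_crossing_def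
proof (intro conjI allI)
  have cutA: "word_perm A t \<le> i \<longleftrightarrow> t \<le> i" for t
    using preserves_cut_word_perm[OF assms(1)] by (simp add: preserves_cut_def)
  have cutB: "word_perm B r \<le> i \<longleftrightarrow> r \<le> i" for r
    using preserves_cut_word_perm[OF assms(2)] by (simp add: preserves_cut_def)
  show "word_perm A i \<le> i" "i < word_perm A (Suc i)"
    using cutA[of i] cutA[of "Suc i"] by simp_all
  have step: "word_perm A (stransp i t) = word_perm A (Suc i) \<or>
      (word_perm A (stransp i t) \<le> i \<and> word_perm A (stransp i t) \<noteq> word_perm A i) \<longleftrightarrow> t \<le> i"
    for t
  proof -
    consider "t = i" | "t = Suc i" | "t \<noteq> i" "t \<noteq> Suc i"
      by blast
    then show ?thesis
      by cases (simp_all add: inj_eq[OF inj_word_perm] cutA stransp_def)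
  qed
  fix r
  show "r \<le> i \<longleftrightarrow> word_perm (A @ i # B) r = word_perm A (Suc i) \<or>
      (word_perm (A @ i # B) r \<le> i \<and> word_perm (A @ i # B) r \<noteq> word_perm A i)"
    by (simp only: word_perm_append_Cons_apply step cutB)
qed

lemma single_crossing_unique:
  assumes sc: "single_crossing i \<pi> x y" and sc': "single_crossing i \<pi> x' y'" and "surj \<pi>"
  shows "x = x' \<and> y = y'"
proof -
  note bounds = single_crossing_bounds[OF sc]
  obtain r s where r: "\<pi> r = x" and s: "\<pi> s = y"
    using assms(3) by (metis surjD)
  then have "\<not> r \<le> i" "s \<le> i"
    using single_crossing_position_iff[OF sc, of r] single_crossing_position_iff[OF sc, of s] bounds
    by auto
  then show ?thesis
    using single_crossing_position_iff[OF sc', of r] single_crossing_position_iff[OF sc', of s]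
      r s bounds by auto
qed

context
  fixes i u x y
  assumes cross: "single_crossing i u x y"
begin

lemma single_crossing_inversion_across:
  assumes "inversion u a b" "a \<le> i" "i < b"
  shows "a = x \<or> b = y"
proof (rule ccontr)
  assume contra: "\<not> (a = x \<or> b = y)"
  obtain p q where "p < q" "u p = b" "u q = a"
    using assms(1) by (auto simp: inversion_def)
  then show False
    using single_crossing_position_low[OF cross, of q] single_crossing_position_high[OF cross, of p]
      assms contra by auto
qed

lemma single_crossing_not_inversion_x:
  assumes "a \<le> i" "a \<noteq> x"
  shows "\<not> inversion u a x"
proof
  assume "inversion u a x"
  then obtain p q where "p < q" "u p = x" "u q = a"
    by (auto simp: inversion_def)
  then show False
    using single_crossing_position_x[OF cross, of p] single_crossing_position_low[OF cross, of q]
      assms by auto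
qed

lemma single_crossing_not_inversion_y:
  assumes "i < b" "b \<noteq> y"
  shows "\<not> inversion u y b"
proof
  assume "inversion u y b"
  then obtain p q where "p < q" "u p = b" "u q = y"
    by (auto simp: inversion_def)
  then show False
    using single_crossing_position_y[OF cross, of q] single_crossing_position_high[OF cross, of p]
      assms by auto
qed

lemma single_crossing_not_inversion_y_at:
  assumes inj: "inj u" and "u i = y" "a \<le> i" "a \<noteq> x"
  shows "\<not> inversion u a y"
proof
  assume "inversion u a y"
  then obtain p q where "p < q" "u p = y" "u q = a"
    by (auto simp: inversion_def)
  moreover from this have "p = i"
    using assms(2) inj by (metis injD)
  ultimately show False
    using single_crossing_position_low[OF cross, of q] assms by auto
qed

lemma single_crossing_not_inversion_x_at:
  assumes inj: "inj u" and "u (Suc i) = x" "i < b" "b \<noteq> y"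
  shows "\<not> inversion u x b"
proof
  assume "inversion u x b"
  then obtain p q where "p < q" "u p = b" "u q = x"
    by (auto simp: inversion_def)
  moreover from this have "q = Suc i"
    using assms(2) inj by (metis injD)
  ultimately show False
    using single_crossing_position_high[OF cross, of p] assms by auto
qed

end

text \<open>Below, \<pi> is the permutation of a prefix of a reduced word of u that is followed by
  another letter i, and the single crossing of \<pi> comes from an earlier letter i.\<close>

context
  fixes i u x y \<pi> p q
  assumes cross: "single_crossing i u x y" and inj: "inj u"
    and cross': "single_crossing i \<pi> p q" and bij: "bij \<pi>"
    and ascent: "\<pi> i < \<pi> (Suc i)"
    and inv: "\<And>a b. inversion (\<pi> \<circ> stransp i) a b \<Longrightarrow> inversion u a b"
begin

lemma inversion_after_swapI:
  assumes "r < s" "\<pi> (stransp i r) = b" "\<pi> (stransp i s) = a" "a < b"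
  shows "inversion u a b"
  using assms by (intro inv inversionI[of r s]) simp_all

lemma second_crossing_moves_q:
  assumes upper: "\<pi> i = q" and right: "y = Suc i \<or> u (Suc i) = x"
  shows False
proof -
  define b where "b = \<pi> (Suc i)"
  note bounds = single_crossing_bounds[OF cross'] single_crossing_bounds[OF cross]
  have "q < b"
    using ascent upper by (simp add: b_def)
  obtain rp where rp: "\<pi> rp = p"
    using bij by (metis bij_pointE)
  have "i < rp" "rp \<noteq> Suc i"
    using single_crossing_position_x[OF cross' rp] rp bounds \<open>q < b\<close> by (auto simp: b_def)
  then have inv_pq: "inversion u p q"
    using rp upper bounds by (intro inversion_after_swapI[of "Suc i" rp]) (auto simp: stransp_def)
  have inv_pb: "inversion u p b"
    using rp \<open>i < rp\<close> \<open>rp \<noteq> Suc i\<close> bounds \<open>q < b\<close>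
    by (intro inversion_after_swapI[of i rp]) (auto simp: stransp_def b_def)
  have inv_qb: "inversion u q b"
    using upper \<open>q < b\<close>
    by (intro inversion_after_swapI[of i "Suc i"]) (auto simp: stransp_def b_def)
  have "p = x"
    using single_crossing_inversion_across[OF cross inv_pq] bounds
      single_crossing_inversion_across[OF cross inv_pb] \<open>q < b\<close> by auto
  from right show False
  proof
    assume y: "y = Suc i"
    show False
    proof (cases "q = y")
      case True
      then show False
        using single_crossing_not_inversion_y[OF cross, of b] inv_qb \<open>q < b\<close> bounds by simp
    next
      case False
      obtain ry where ry: "\<pi> ry = y"
        using bij by (metis bij_pointE)
      have "i < ry" "ry \<noteq> Suc i"
        using single_crossing_position_high[OF cross', of ry] ry bounds False \<open>q < b\<close> y
        by (auto simp: b_def)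
      then have "inversion u y q"
        using ry upper y False bounds
        by (intro inversion_after_swapI[of "Suc i" ry]) (auto simp: stransp_def)
      then show False
        using single_crossing_not_inversion_y[OF cross, of q] False bounds by simp
    qed
  next
    assume "u (Suc i) = x"
    then show False
      using single_crossing_not_inversion_x_at[OF cross inj] inv_pq inv_pb \<open>p = x\<close> \<open>q < b\<close> bounds
      by (metis less_trans nat_neq_iff)
  qed
qed

lemma second_crossing_moves_p:
  assumes lower: "\<pi> (Suc i) = p" and left: "x = i \<or> u i = y"
  shows False
proof -
  define a where "a = \<pi> i"
  note bounds = single_crossing_bounds[OF cross'] single_crossing_bounds[OF cross]
  have "a < p"
    using ascent lower by (simp add: a_def)
  obtain rq where rq: "\<pi> rq = q"
    using bij by (metis bij_pointE)
  have "rq < i"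
    using single_crossing_position_y[OF cross' rq] rq bounds \<open>a < p\<close> a_def
    by (metis le_neq_implies_less less_trans not_le)
  then have inv_pq: "inversion u p q"
    using rq lower bounds by (intro inversion_after_swapI[of rq i]) (auto simp: stransp_def)
  have inv_aq: "inversion u a q"
    using rq \<open>rq < i\<close> bounds \<open>a < p\<close>
    by (intro inversion_after_swapI[of rq "Suc i"]) (auto simp: stransp_def a_def)
  have inv_ap: "inversion u a p"
    using lower \<open>a < p\<close>
    by (intro inversion_after_swapI[of i "Suc i"]) (auto simp: stransp_def a_def)
  have "q = y"
    using single_crossing_inversion_across[OF cross inv_pq] bounds
      single_crossing_inversion_across[OF cross inv_aq] \<open>a < p\<close> by auto
  from left show False
  proof
    assume x: "x = i"
    show False
    proof (cases "p = x")
      case True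
      then show False
        using single_crossing_not_inversion_x[OF cross, of a] inv_ap \<open>a < p\<close> bounds by simp
    next
      case False
      obtain rx where rx: "\<pi> rx = x"
        using bij by (metis bij_pointE)
      have "rx \<le> i" "rx \<noteq> i"
        using single_crossing_position_low[OF cross', of rx] rx bounds False \<open>a < p\<close> x
        by (auto simp: a_def)
      then have "inversion u a x"
        using rx \<open>a < p\<close> bounds x
        by (intro inversion_after_swapI[of rx "Suc i"]) (auto simp: stransp_def a_def)
      then show False
        using single_crossing_not_inversion_x[OF cross, of a] \<open>a < p\<close> bounds x by simp
    qed
  next
    assume "u i = y"
    then show False
      using single_crossing_not_inversion_y_at[OF cross inj] inv_pq inv_aq \<open>q = y\<close> \<open>a < p\<close> bounds
      by (metis le_trans less_imp_le_nat nat_neq_iff)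
  qed
qed

lemma second_crossing_moves_neither:
  assumes "\<pi> i \<noteq> q" and "\<pi> (Suc i) \<noteq> p"
  shows False
proof -
  define a b where "a = \<pi> i" and "b = \<pi> (Suc i)"
  note bounds = single_crossing_bounds[OF cross'] single_crossing_bounds[OF cross]
  have a: "a \<le> i" "a \<noteq> p" and b: "i < b" "b \<noteq> q"
    using single_crossing_position_iff[OF cross', of i]
      single_crossing_position_iff[OF cross', of "Suc i"] assms
    by (auto simp: a_def b_def)
  obtain rp rq where rp: "\<pi> rp = p" and rq: "\<pi> rq = q"
    using bij by (metis bij_pointE)
  have "rp \<noteq> Suc i" "rq \<noteq> i"
    using assms rp rq by auto
  then have "Suc i < rp" "rq < i"
    using single_crossing_position_x[OF cross' rp] single_crossing_position_y[OF cross' rq]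
    by (simp_all add: Suc_lessI)
  then have "inversion u p q" "inversion u a b" "inversion u p b" "inversion u a q"
    using rp rq bounds a b ascent
    by (intro inversion_after_swapI[of rq rp] inversion_after_swapI[of i "Suc i"]
        inversion_after_swapI[of i rp] inversion_after_swapI[of rq "Suc i"];
        auto simp: stransp_def a_def b_def)+
  then show False
    using single_crossing_inversion_across[OF cross] bounds a b by metis
qed

lemma no_second_crossing:
  assumes "x = i \<or> u i = y" and "y = Suc i \<or> u (Suc i) = x"
  shows False
  using second_crossing_moves_q second_crossing_moves_p second_crossing_moves_neither assms by blast

end

lemma between_iff:
  assumes iA: "i \<notin> set A" and iB: "i \<notin> set B"
  shows "between (A @ i # B) i j \<longleftrightarrow> j \<in> set A \<and> j \<in> set B"
proof
  assume "between (A @ i # B) i j"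
  then obtain a p b where abp: "a < p" "p < b" "b < length (A @ i # B)"
    "(A @ i # B) ! a = j" "(A @ i # B) ! p = i" "(A @ i # B) ! b = j"
    unfolding between_def by blast
  have "p = length A"
  proof (rule ccontr)
    assume "p \<noteq> length A"
    then have "p < length A \<and> A ! p = i \<or> p - length A - 1 < length B \<and> B ! (p - length A - 1) = i"
      using abp by (auto simp: nth_append split: if_splits)
    then show False
      using iA iB by (metis nth_mem)
  qed
  then have "a < length A \<and> A ! a = j" "b - length A - 1 < length B \<and> B ! (b - length A - 1) = j"
    using abp by (auto simp: nth_append split: if_splits)
  then show "j \<in> set A \<and> j \<in> set B"
    by (metis nth_mem)
next
  assume "j \<in> set A \<and> j \<in> set B"
  then obtain a b where "a < length A" "A ! a = j" "b < length B" "B ! b = j"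
    by (metis in_set_conv_nth)
  then show "between (A @ i # B) i j"
    unfolding between_def
    by (intro exI[of _ a] exI[of _ "length A"] exI[of _ "length A + 1 + b"]) (auto simp: nth_append)
qed

lemma count_list_eq_1_iff:
  "count_list vs i = 1 \<longleftrightarrow> (\<exists>A B. vs = A @ i # B \<and> i \<notin> set A \<and> i \<notin> set B)"
  using count_list_Suc_split_first[of vs i 0] by (auto simp: count_list_0_iff)

lemma unconfined_word_iff:
  "unconfined_word vs i \<longleftrightarrow> (\<exists>A B. vs = A @ i # B \<and> i \<notin> set A \<and> i \<notin> set B \<and>
     (Suc i \<notin> set A \<or> Suc i \<notin> set B) \<and> (i - 1 \<notin> set A \<or> i - 1 \<notin> set B))"
    (is "_ \<longleftrightarrow> (\<exists>A B. ?split A B)")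
proof -
  have confined_iff: "\<not> between (A @ i # B) i (i + 1) \<longleftrightarrow> Suc i \<notin> set A \<or> Suc i \<notin> set B"
    "\<not> (1 \<le> i \<and> between (A @ i # B) i (i - 1)) \<longleftrightarrow> i - 1 \<notin> set A \<or> i - 1 \<notin> set B"
    if "i \<notin> set A" "i \<notin> set B" for A B
    using between_iff[OF that] that(1) by (cases i; simp)+
  show ?thesis
  proof
    assume unc: "unconfined_word vs i"
    then obtain A B where "vs = A @ i # B" "i \<notin> set A" "i \<notin> set B"
      unfolding unconfined_word_def count_list_eq_1_iff by blast
    then show "\<exists>A B. ?split A B"
      using unc confined_iff unfolding unconfined_word_def by blast
  next
    assume "\<exists>A B. ?split A B"
    then obtain A B where "?split A B"
      by blast
    then show "unconfined_word vs i"
      using confined_iff[of A B] unfolding unconfined_word_def count_list_eq_1_iff by blast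
  qed
qed

lemma subseq_split_at_unique_letter:
  assumes sub: "subseq (A @ i # B) (C @ i # D)" and iC: "i \<notin> set C" and iD: "i \<notin> set D"
  shows "set A \<subseteq> set C \<and> set B \<subseteq> set D"
proof -
  obtain E F where EF: "C @ i # D = E @ F" "subseq A E" "subseq (i # B) F"
    using list_emb_appendD[OF sub] by blast
  then obtain G H where F: "F = G @ i # H" and "subseq B H"
    using list_emb_ConsD[OF EF(3)] by auto
  then have "C = E @ G \<and> D = H"
    using EF(1) append_Cons_eq_iff[OF iC iD, of "E @ G" H] by simp
  then show ?thesis
    using EF(2) \<open>subseq B H\<close> by (auto dest: list_emb_set)
qed

definition unconfined_crossing :: "nat \<Rightarrow> (nat \<Rightarrow> nat) \<Rightarrow> bool" where
  "unconfined_crossing i u \<longleftrightarrow> (\<exists>x y. single_crossing i u x y \<and>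
     (x = i \<or> u i = y) \<and> (y = Suc i \<or> u (Suc i) = x))"

lemma reduced_word_unconfined_crossing_iff:
  assumes red: "reduced_word n u (A @ i # B)" and iA: "i \<notin> set A" and iB: "i \<notin> set B"
  shows "unconfined_crossing i u \<longleftrightarrow>
    (Suc i \<notin> set A \<or> Suc i \<notin> set B) \<and> (i - 1 \<notin> set A \<or> i - 1 \<notin> set B)"
proof -
  have u: "u = word_perm (A @ i # B)"
    using red by (simp add: reduced_word_def)
  have redA: "reduced_word n (word_perm A) A"
    using red reduced_word_infix[of n u "[]" A "i # B"] by simp
  have redB: "reduced_word n (word_perm B) B"
    using red reduced_word_infix[of n u "A @ [i]" B "[]"] by simp
  have fixes_Suc_iff: "word_perm C (Suc i) = Suc i \<longleftrightarrow> Suc i \<notin> set C"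
    if "reduced_word n (word_perm C) C" "i \<notin> set C" for C
    using reduced_word_moves_Suc_iff[OF that(1), of i] that(2) by blast
  have fixes_iff: "word_perm C i = i \<longleftrightarrow> i - 1 \<notin> set C"
    if "reduced_word n (word_perm C) C" "i \<notin> set C" for C
  proof (cases i)
    case 0
    then have "\<forall>k\<in>set C. k \<noteq> i \<and> Suc k \<noteq> i"
      using that(2) by blast
    then have "word_perm C i = i"
      by (rule word_perm_fixpoint)
    then show ?thesis
      using 0 that(2) by simp
  next
    case (Suc k)
    then show ?thesis
      using reduced_word_moves_Suc_iff[OF that(1), of k] that(2) by auto
  qed
  have cross: "single_crossing i u (word_perm A i) (word_perm A (Suc i))"
    using single_crossing_word_perm[OF iA iB] u by simp
  have "unconfined_crossing i u \<longleftrightarrow> (word_perm A i = i \<or> u i = word_perm A (Suc i)) \<and>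
      (word_perm A (Suc i) = Suc i \<or> u (Suc i) = word_perm A i)"
    using single_crossing_unique[OF _ cross] bij_word_perm[THEN bij_is_surj] cross u
    unfolding unconfined_crossing_def by metis
  then show ?thesis
    using fixes_Suc_iff[OF redA iA] fixes_Suc_iff[OF redB iB]
      fixes_iff[OF redA iA] fixes_iff[OF redB iB]
      word_perm_append_Cons_eq_iff[of A i B i] word_perm_append_Cons_eq_iff[of A i B "Suc i"] u
    by (simp add: stransp_def) blast
qed

lemma unconfined_crossing_count_list:
  assumes red: "reduced_word n u vs" and "unconfined_crossing i u"
  shows "count_list vs i = 1"
proof -
  obtain x y where cross: "single_crossing i u x y"
    and left: "x = i \<or> u i = y" and right: "y = Suc i \<or> u (Suc i) = x"
    using assms(2) unfolding unconfined_crossing_def by blast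
  have u: "u = word_perm vs"
    using red by (simp add: reduced_word_def)
  obtain s where "u s = y"
    using bij_word_perm[of vs] u by (metis bij_pointE)
  then have "\<not> preserves_cut i u"
    using single_crossing_position_y[OF cross] single_crossing_bounds(2)[OF cross]
    by (metis not_le preserves_cut_def)
  then obtain A B where vs: "vs = A @ i # B" and iA: "i \<notin> set A"
    using reduced_word_letter_iff[OF red] split_list_first by metis
  have "i \<notin> set B"
  proof
    assume "i \<in> set B"
    then obtain M T where B: "B = M @ i # T" and iM: "i \<notin> set M"
      using split_list_first by metis
    let ?\<pi> = "word_perm (A @ i # M)"
    have red': "reduced_word n u ((A @ i # M) @ i # T)"
      using red vs B by simp
    have "inversion u a b" if "inversion (?\<pi> \<circ> stransp i) a b" for a b
      using reduced_word_prefix_inversion[of n u "A @ i # M @ [i]" T] red vs B that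
      by (simp add: word_perm_append o_assoc)
    then show False
      using no_second_crossing[OF cross inj_word_perm[of vs, folded u]
          single_crossing_word_perm[OF iA iM] bij_word_perm reduced_word_ascent[OF red']
          _ left right]
      by blast
  qed
  then show ?thesis
    using vs iA by (simp add: count_list_0_iff)
qed

lemma reduced_word_unconfined:
  assumes red: "reduced_word n u vs" and uc: "unconfined_crossing i u"
  shows "unconfined_word vs i"
proof -
  obtain A B where "vs = A @ i # B" "i \<notin> set A" "i \<notin> set B"
    using unconfined_crossing_count_list[OF red uc] count_list_eq_1_iff by metis
  then show ?thesis
    using reduced_word_unconfined_crossing_iff[of n u A i B] red uc unfolding unconfined_word_iff
    by blast
qed

theorem lemma2p10:
  fixes n i :: nat and w :: "nat \<Rightarrow> nat"
  assumes "w permutes {1..n}"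
    and "i \<in> supp n w"
    and "unconfined n w i"
  shows "\<forall>u. bruhat_le n u w \<longrightarrow> i \<notin> supp n u \<or> unconfined n u i"
proof (intro allI impI)
  fix u assume "bruhat_le n u w"
  then obtain us ws where redu: "reduced_word n u us" and redw: "reduced_word n w ws"
    and sub: "subseq us ws"
    unfolding bruhat_le_def by blast
  have "unconfined_word ws i"
    using assms(3) redw unfolding unconfined_def by blast
  then obtain C D where ws: "ws = C @ i # D" and iC: "i \<notin> set C" and iD: "i \<notin> set D"
    and right: "Suc i \<notin> set C \<or> Suc i \<notin> set D" and left: "i - 1 \<notin> set C \<or> i - 1 \<notin> set D"
    unfolding unconfined_word_iff by blast
  show "i \<notin> supp n u \<or> unconfined n u i"
  proof (cases "i \<in> set us")
    case False
    then show ?thesis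
      using preserves_cut_word_perm preserves_cut_not_in_supp redu by (auto simp: reduced_word_def)
  next
    case True
    then obtain A B where us: "us = A @ i # B"
      using split_list_first by metis
    then have "set A \<subseteq> set C \<and> set B \<subseteq> set D"
      using subseq_split_at_unique_letter sub ws iC iD by simp
    then have "unconfined_crossing i u"
      using reduced_word_unconfined_crossing_iff[of n u A i B] redu us iC iD right left by auto
    then show ?thesis
      unfolding unconfined_def using reduced_word_unconfined by blast
  qed
qed

end
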